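(* Let $d\ge 1$ be an integer and let $F^{A_2}_{d}(x,y)\in\mathbb{R}[x,y]$ be the folding polynomial associated to the root system $A_2$ (defined in the context). Define the real folding polynomial $$F^{A_2}_{\mathbb{R},d}(x,y) := F^{A_2}_{d}(x+iy,\ x-iy),$$ where $i=\sqrt{-1}$; it has real coefficients. Then $F^{A_2}_{\mathbb{R},d}$ has exactly $\binom{d}{2}$ real critical points with critical value $0$, and it has $$\tfrac{1}{3}d^2-d \ \text{ real critical points with critical value } -1 \text{ if } d\equiv 0 \pmod 3,\qquad \tfrac{1}{3}d^2-d+\tfrac{2}{3} \ \text{ otherwise}.$$ All other critical points of $F^{A_2}_{\mathbb{R},d}$ also have real coordinates and have critical value $8$.
   Context: The folding polynomial $F^{A_2}_d(x,y)$ is defined by $F^{A_2}_d(x,y) := 2+\det A_d(x,y)+\det A_d(y,x)$, where $A_d(x,y)$ is the $d\times d$ matrix with entries: $(A_d)_{j,j}=x$ for all $j$; $(A_d)_{j,j+1}=1$ for all $j$; $(A_d)_{2,1}=2y$ and $(A_d)_{j+1,j}=y$ for $j\ge 2$; $(A_d)_{3,1}=3$ and $(A_d)_{j+2,j}=1$ for $j\ge 2$; all other entries $0$. (So the first column is $(x,2y,3,0,\dots,0)^T$, and $A_d(y,x)$ is obtained by interchanging the roles of $x$ and $y$.) A critical point of a polynomial $f\in\mathbb{R}[x,y]$ is a point where both partial derivatives vanish; its critical value is the value of $f$ there. *)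

theory Defs
  imports Complex_Main "Jordan_Normal_Form.Determinant"
begin

text \<open>The d x d matrix A_d(x,y), 0-based indices: row i, column j.\<close>
definition A_mat :: "nat \<Rightarrow> complex \<Rightarrow> complex \<Rightarrow> complex mat" where
  "A_mat d x y = mat d d (\<lambda>(i, j).
     if i = j then x
     else if j = i + 1 then 1
     else if i = 1 \<and> j = 0 then 2 * y
     else if i = j + 1 \<and> j \<ge> 1 then y
     else if i = 2 \<and> j = 0 then 3
     else if i = j + 2 \<and> j \<ge> 1 then 1
     else 0)"

definition folding_A2 :: "nat \<Rightarrow> complex \<Rightarrow> complex \<Rightarrow> complex" where
  "folding_A2 d x y = 2 + det (A_mat d x y) + det (A_mat d y x)"

definition folding_A2_R :: "nat \<Rightarrow> complex \<Rightarrow> complex \<Rightarrow> complex" where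
  "folding_A2_R d x y = folding_A2 d (x + \<i> * y) (x - \<i> * y)"

definition crit_points :: "(complex \<Rightarrow> complex \<Rightarrow> complex) \<Rightarrow> (complex \<times> complex) set" where
  "crit_points f = {(x, y). ((\<lambda>t. f t y) has_field_derivative 0) (at x) \<and>
                            ((\<lambda>t. f x t) has_field_derivative 0) (at y)}"

end

theory Submission
  imports Defs "HOL-Computational_Algebra.Fundamental_Theorem_Algebra"
begin

(* Write x + i y = a + b + c and x - i y = ab + ac + bc with abc = 1, i.e. let a, b, c be the
   roots of t^3 - (x + i y) t^2 + (x - i y) t - 1. The determinants of A_d are then power sums,
   so F(x, y) = 2 + a^d + b^d + c^d + a^-d + b^-d + c^-d, and the partial derivatives of F can be
   written through complete homogeneous symmetric polynomials of the roots. This shows that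
   (x, y) is critical iff a, b, c are distinct and a^d - a^-d = b^d - b^-d = c^d - c^-d. For
   u = a^d, v = b^d, w = c^d with uvw = 1 this leaves u = v = w a cube root of unity (critical
   value 8 if u = 1 and -1 otherwise) or {u, v, w} = {-1, -1, 1} (critical value 0). In every case
   |a| = |b| = |c| = 1, so ab + ac + bc is the conjugate of a + b + c and x, y are real.
   A critical point determines its roots up to order. Hence the points of value 0 correspond to
   the ordered pairs of distinct d-th roots of -1, two pairs per point, and those of value -1 to
   the ordered triples of distinct roots whose d-th powers equal one primitive cube root of
   unity, six triples per point; these triples are counted by inclusion-exclusion over the
   coincidences a = b, a = c, b = c. *)

section \<open>The determinant of A_d\<close>

lemma det_mat_delete_last_row_hessenberg:
  fixes M :: "'a::idom mat"
  assumes M: "M \<in> carrier_mat (Suc n) (Suc n)"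
    and upper: "\<And>i j. i < Suc n \<Longrightarrow> j < Suc n \<Longrightarrow> Suc i < j \<Longrightarrow> M $$ (i, j) = 0"
    and superdiag: "\<And>i. i < n \<Longrightarrow> M $$ (i, Suc i) = 1"
    and j: "j \<le> n"
  shows "det (mat_delete M n j) = det (mat j j (($$) M))"
proof -
  define A1 where "A1 = mat j j (($$) M)"
  define A3 where "A3 = mat (n - j) j (\<lambda>(a, b). M $$ (a + j, b))"
  define A4 where "A4 = mat (n - j) (n - j) (\<lambda>(a, b). M $$ (a + j, b + j + 1))"
  have blocks: "mat_delete M n j = four_block_mat A1 (0\<^sub>m j (n - j)) A3 A4"
    by (rule eq_matI) (use M j upper in \<open>auto simp: mat_delete_def A1_def A3_def A4_def\<close>)
  have "det A4 = prod_list (diag_mat A4)"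
    by (rule det_lower_triangular[of "n - j"]) (use upper j in \<open>auto simp: A4_def\<close>)
  also have "diag_mat A4 = replicate (n - j) 1"
    unfolding diag_mat_def using superdiag j by (auto simp: A4_def intro!: nth_equalityI)
  finally have "det A4 = 1" by simp
  moreover have "det (mat_delete M n j) = det A1 * det A4"
    unfolding blocks by (rule det_four_block_mat_upper_right_zero) (auto simp: A1_def A3_def A4_def)
  ultimately show ?thesis by (simp add: A1_def)
qed

lemma det_hessenberg_expand_last_row:
  fixes M :: "'a::idom mat"
  assumes M: "M \<in> carrier_mat (Suc n) (Suc n)"
    and upper: "\<And>i j. i < Suc n \<Longrightarrow> j < Suc n \<Longrightarrow> Suc i < j \<Longrightarrow> M $$ (i, j) = 0"
    and superdiag: "\<And>i. i < n \<Longrightarrow> M $$ (i, Suc i) = 1"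
  shows "det M = (\<Sum>j<Suc n. (-1) ^ (n + j) * M $$ (n, j) * det (mat j j (($$) M)))"
  unfolding laplace_expansion_row[OF M lessI] cofactor_def
  using det_mat_delete_last_row_hessenberg[OF assms]
  by (intro sum.cong) (auto simp: less_Suc_eq_le)

lemma A_mat_index:
  "i < n \<Longrightarrow> j < n \<Longrightarrow> A_mat n x y $$ (i, j) =
     (if i = j then x
      else if j = i + 1 then 1
      else if i = 1 \<and> j = 0 then 2 * y
      else if i = j + 1 \<and> j \<ge> 1 then y
      else if i = 2 \<and> j = 0 then 3
      else if i = j + 2 \<and> j \<ge> 1 then 1
      else 0)"
  by (simp add: A_mat_def)

lemma det_A_mat_Suc:
  "det (A_mat (Suc n) x y) = (\<Sum>j<Suc n. (-1) ^ (n + j) * A_mat (Suc n) x y $$ (n, j) * det (A_mat j x y))"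
proof -
  have "mat j j (($$) (A_mat (Suc n) x y)) = A_mat j x y" if "j < Suc n" for j
    by (rule eq_matI) (use that in \<open>auto simp: A_mat_def\<close>)
  then show ?thesis
    by (subst det_hessenberg_expand_last_row) (auto simp: A_mat_def intro!: sum.cong)
qed

lemma det_A_mat_0: "det (A_mat 0 x y) = 1"
  by (rule det_dim_zero) (simp add: A_mat_def)

lemma det_A_mat_1: "det (A_mat 1 x y) = x"
  using det_A_mat_Suc[of 0 x y] by (simp add: det_A_mat_0 A_mat_index)

lemma det_A_mat_2: "det (A_mat 2 x y) = x^2 - 2 * y"
  using det_A_mat_Suc[of 1 x y]
  by (simp add: numeral_2_eq_2 det_A_mat_0 det_A_mat_1[unfolded One_nat_def] A_mat_index power2_eq_square)

lemma det_A_mat_recurrence: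
  "det (A_mat (n + 3) x y) =
     x * det (A_mat (n + 2) x y) - y * det (A_mat (n + 1) x y) + (if n = 0 then 3 else 1) * det (A_mat n x y)"
proof -
  define f where "f j = (-1) ^ (n + 2 + j) * A_mat (Suc (n + 2)) x y $$ (n + 2, j) * det (A_mat j x y)" for j
  have "n + 3 = Suc (n + 2)" by simp
  then have expansion: "det (A_mat (n + 3) x y) = (\<Sum>j<Suc (n + 2). f j)"
    unfolding f_def by (simp only: det_A_mat_Suc)
  have sign: "(-1 :: complex) ^ (n + 2 + (n + k)) = (-1) ^ k" for k
  proof -
    have "n + 2 + (n + k) = 2 * (n + 1) + k" by simp
    then show ?thesis by (simp only: power_add power_mult) simp
  qed
  have "f j = 0" if "j < n" for j
    using that by (simp add: f_def A_mat_index)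
  then have "(\<Sum>j<n. f j) = 0" by simp
  moreover have "(\<Sum>j<Suc (n + 2). f j) = (\<Sum>j<n. f j) + f n + f (n + 1) + f (n + 2)"
    by (simp add: eval_nat_numeral)
  moreover have "f n = (if n = 0 then 3 else 1) * det (A_mat n x y)"
    using sign[of 0] by (simp add: f_def A_mat_index)
  moreover have "f (n + 1) = - y * det (A_mat (n + 1) x y)"
    using sign[of 1] by (simp add: f_def A_mat_index)
  moreover have "f (n + 2) = x * det (A_mat (n + 2) x y)"
    using sign[of 2] by (simp add: f_def A_mat_index)
  ultimately show ?thesis
    unfolding expansion by simp
qed

(* Newton's recurrence for the power sums a^n + b^n + c^n of the roots of t^3 - X t^2 + Y t - 1.
   The value 3 at n = 0 is not det (A_mat 0 x y) = 1: it stands for the entry 3 in the first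
   column of A_d, see det_A_mat_recurrence. *)
fun power_sum :: "nat \<Rightarrow> complex \<Rightarrow> complex \<Rightarrow> complex" where
  "power_sum 0 X Y = 3"
| "power_sum (Suc 0) X Y = X"
| "power_sum (Suc (Suc 0)) X Y = X^2 - 2 * Y"
| "power_sum (Suc (Suc (Suc n))) X Y =
     X * power_sum (Suc (Suc n)) X Y - Y * power_sum (Suc n) X Y + power_sum n X Y"

lemma det_A_mat_eq_power_sum: "n \<ge> 1 \<Longrightarrow> det (A_mat n x y) = power_sum n x y"
proof (induction n x y rule: power_sum.induct)
  case (4 n x y)
  have "det (A_mat (n + 3) x y) = power_sum (n + 3) x y"
  proof (cases "n = 0")
    case True
    have "power_sum 3 x y = x * (x^2 - 2 * y) - y * x + 3"
      by (simp add: eval_nat_numeral)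
    then show ?thesis
      using True det_A_mat_recurrence[of 0 x y]
      by (simp add: det_A_mat_0 det_A_mat_1[unfolded One_nat_def] det_A_mat_2[unfolded numeral_2_eq_2] power2_eq_square)
  next
    case False
    then show ?thesis
      using det_A_mat_recurrence[of n x y] 4 by (simp add: eval_nat_numeral)
  qed
  then show ?case by (simp add: eval_nat_numeral)
qed (simp_all add: det_A_mat_1[unfolded One_nat_def] det_A_mat_2[unfolded numeral_2_eq_2] power2_eq_square)

section \<open>Partial derivatives of the folding polynomial\<close>

lemma nat_induct3 [case_names 0 1 2 step]:
  assumes "P 0" "P 1" "P 2" "\<And>n. P n \<Longrightarrow> P (Suc n) \<Longrightarrow> P (Suc (Suc n)) \<Longrightarrow> P (Suc (Suc (Suc n)))"
  shows "P n"
proof (induction n rule: less_induct)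
  case (less n)
  consider "n = 0" | "n = 1" | "n = 2" | m where "n = Suc (Suc (Suc m))"
    by (metis One_nat_def numeral_2_eq_2 not0_implies_Suc)
  then show ?case
    by cases (use assms less in auto)
qed

(* complete_hom (n + 2) X Y is the complete homogeneous symmetric polynomial of degree n in the
   roots of t^3 - X t^2 + Y t - 1. *)
fun complete_hom :: "nat \<Rightarrow> complex \<Rightarrow> complex \<Rightarrow> complex" where
  "complete_hom 0 X Y = 0"
| "complete_hom (Suc 0) X Y = 0"
| "complete_hom (Suc (Suc 0)) X Y = 1"
| "complete_hom (Suc (Suc (Suc n))) X Y =
     X * complete_hom (Suc (Suc n)) X Y - Y * complete_hom (Suc n) X Y + complete_hom n X Y"

lemma power_sum_Suc_eq_complete_hom:
  "power_sum (Suc n) X Y =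
     X * complete_hom (Suc (Suc n)) X Y - 2 * Y * complete_hom (Suc n) X Y + 3 * complete_hom n X Y"
proof (induction n X Y rule: complete_hom.induct)
  case (4 n X Y)
  show ?case
    by (simp only: power_sum.simps(4)[of "Suc n"] 4 complete_hom.simps(4)[of "Suc (Suc n)"]
        complete_hom.simps(4)[of "Suc n"] complete_hom.simps(4)[of n]) (simp add: algebra_simps)
qed (simp_all add: algebra_simps power2_eq_square)

lemma has_field_derivative_power_sum:
  assumes a: "(a has_field_derivative a') (at t)" and b: "(b has_field_derivative b') (at t)"
  shows "((\<lambda>s. power_sum n (a s) (b s)) has_field_derivative
     of_nat n * (complete_hom (Suc n) (a t) (b t) * a' - complete_hom n (a t) (b t) * b')) (at t)"
proof (induction n rule: nat_induct3)
  case 0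
  show ?case by simp
next
  case 1
  show ?case using a by simp
next
  case 2
  have "((\<lambda>s. (a s)^2 - 2 * b s) has_field_derivative (2 * a t * a' - 2 * b')) (at t)"
    using a b by (auto intro!: derivative_eq_intros)
  then show ?case by (simp add: numeral_2_eq_2 algebra_simps)
next
  case (step n)
  let ?h = "\<lambda>k. complete_hom k (a t) (b t)" and ?p = "\<lambda>k. power_sum k (a t) (b t)"
  let ?D = "a t * (of_nat (Suc (Suc n)) * (?h (Suc (Suc (Suc n))) * a' - ?h (Suc (Suc n)) * b'))
       + a' * ?p (Suc (Suc n))
     - (b t * (of_nat (Suc n) * (?h (Suc (Suc n)) * a' - ?h (Suc n) * b')) + b' * ?p (Suc n))
     + of_nat n * (?h (Suc n) * a' - ?h n * b')"
  have "((\<lambda>s. a s * power_sum (Suc (Suc n)) (a s) (b s) - b s * power_sum (Suc n) (a s) (b s)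
        + power_sum n (a s) (b s)) has_field_derivative ?D) (at t)"
    by (intro DERIV_add DERIV_diff DERIV_mult' step a b)
  moreover have "?D = of_nat (Suc (Suc (Suc n))) * (?h (Suc (Suc (Suc (Suc n)))) * a' - ?h (Suc (Suc (Suc n))) * b')"
    by (simp only: power_sum_Suc_eq_complete_hom complete_hom.simps(4)[of "Suc n"]
        complete_hom.simps(4)[of n]) (simp add: algebra_simps)
  ultimately show ?case by simp
qed

definition folding_partial :: "nat \<Rightarrow> complex \<Rightarrow> complex \<Rightarrow> complex" where
  "folding_partial d X Y = complete_hom (Suc d) X Y - complete_hom d Y X"

lemma folding_A2_eq_power_sum: "d \<ge> 1 \<Longrightarrow> folding_A2 d X Y = 2 + power_sum d X Y + power_sum d Y X"
  by (simp add: folding_A2_def det_A_mat_eq_power_sum)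

lemma has_field_derivative_folding_A2:
  assumes d: "d \<ge> 1"
    and a: "(a has_field_derivative a') (at t)" and b: "(b has_field_derivative b') (at t)"
  shows "((\<lambda>s. folding_A2 d (a s) (b s)) has_field_derivative
     of_nat d * (folding_partial d (a t) (b t) * a' + folding_partial d (b t) (a t) * b')) (at t)"
proof -
  have "((\<lambda>s. 2 + power_sum d (a s) (b s) + power_sum d (b s) (a s)) has_field_derivative
     0 + of_nat d * (complete_hom (Suc d) (a t) (b t) * a' - complete_hom d (a t) (b t) * b')
       + of_nat d * (complete_hom (Suc d) (b t) (a t) * b' - complete_hom d (b t) (a t) * a')) (at t)"
    by (intro DERIV_add DERIV_const has_field_derivative_power_sum a b)
  then show ?thesis
    by (simp add: folding_A2_eq_power_sum[OF d] folding_partial_def algebra_simps)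
qed

lemma crit_points_folding_A2_R_iff:
  assumes d: "d \<ge> 1"
  shows "(x, y) \<in> crit_points (folding_A2_R d) \<longleftrightarrow>
     folding_partial d (x + \<i> * y) (x - \<i> * y) = 0 \<and> folding_partial d (x - \<i> * y) (x + \<i> * y) = 0"
    (is "_ \<longleftrightarrow> ?A = 0 \<and> ?B = 0")
proof -
  have "((\<lambda>t. t + \<i> * y) has_field_derivative 1) (at x)" "((\<lambda>t. t - \<i> * y) has_field_derivative 1) (at x)"
    by (auto intro!: derivative_eq_intros)
  from has_field_derivative_folding_A2[OF d this]
  have dx: "((\<lambda>t. folding_A2_R d t y) has_field_derivative of_nat d * (?A + ?B)) (at x)"
    by (simp add: folding_A2_R_def)
  have "((\<lambda>t. x + \<i> * t) has_field_derivative \<i>) (at y)" "((\<lambda>t. x - \<i> * t) has_field_derivative -\<i>) (at y)"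
    by (auto intro!: derivative_eq_intros)
  from has_field_derivative_folding_A2[OF d this]
  have dy: "((\<lambda>t. folding_A2_R d x t) has_field_derivative of_nat d * \<i> * (?A - ?B)) (at y)"
    by (simp add: folding_A2_R_def algebra_simps)
  have "(x, y) \<in> crit_points (folding_A2_R d) \<longleftrightarrow> ?A + ?B = 0 \<and> ?A - ?B = 0"
    using dx dy d unfolding crit_points_def by (auto dest: DERIV_unique)
  then show ?thesis
    by (auto simp: eq_neg_iff_add_eq_0 [symmetric])
qed

section \<open>Parametrisation by the roots of a cubic\<close>

lemma cubic_roots_exist:
  fixes X Y :: complex
  obtains a b c where "a + b + c = X" "a * b + a * c + b * c = Y" "a * b * c = 1"
proof -
  obtain a where "poly [:-1, Y, -X, 1:] a = 0"
    using fundamental_theorem_of_algebra_alt[of "[:-1, Y, -X, 1:]"] by auto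
  then have root: "a^3 - X * a^2 + Y * a = 1"
    by (simp add: algebra_simps power2_eq_square power3_eq_cube)
  define s where "s = X - a"
  define p where "p = a^2 - X * a + Y"
  define r where "r = csqrt (s^2 - 4 * p)"
  define b where "b = (s + r) / 2"
  define c where "c = (s - r) / 2"
  have sum: "b + c = s"
    by (simp add: b_def c_def field_simps)
  have "b * c = (s^2 - r^2) / 4"
    by (simp add: b_def c_def field_simps power2_eq_square)
  then have prod: "b * c = p"
    by (simp add: r_def)
  show thesis
  proof (rule that[of a b c])
    show "a + b + c = X"
      using sum by (simp add: s_def add.assoc)
    have "a * b + a * c + b * c = a * (b + c) + b * c"
      by (simp add: algebra_simps)
    then show "a * b + a * c + b * c = Y"
      unfolding sum prod s_def p_def by (simp add: algebra_simps power2_eq_square)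
    have "a * b * c = a * (b * c)"
      by (simp add: algebra_simps)
    then show "a * b * c = 1"
      unfolding prod p_def using root by (simp add: algebra_simps power2_eq_square power3_eq_cube)
  qed
qed

lemma inverse_eq_of_prod3:
  fixes a b c :: "'a::field"
  assumes "a * b * c = 1"
  shows "inverse a = b * c" "inverse b = a * c" "inverse c = a * b"
  using assms by (auto intro!: inverse_unique simp: algebra_simps)

lemma elementary_symmetric_inverse:
  fixes a b c :: "'a::field"
  assumes "a * b * c = 1"
  shows "inverse a + inverse b + inverse c = a * b + a * c + b * c"
    and "inverse a * inverse b + inverse a * inverse c + inverse b * inverse c = a + b + c"
    and "inverse a * inverse b * inverse c = 1"
  using assms by (simp_all add: inverse_eq_of_prod3[OF assms] algebra_simps)

lemma root_of_elementary_cubic: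
  fixes a b c z :: "'a::idom"
  assumes "a * b * c = 1" "z \<in> {a, b, c}"
  shows "z^3 = (a + b + c) * z^2 - (a * b + a * c + b * c) * z + 1"
proof -
  have "(z - a) * (z - b) * (z - c) = 0" using assms(2) by auto
  then show ?thesis
    using assms(1) by (simp add: algebra_simps power2_eq_square power3_eq_cube)
qed

lemma root_of_elementary_cubic_unique:
  fixes a b c a' b' c' :: "'a::idom"
  assumes "a + b + c = a' + b' + c'" "a * b + a * c + b * c = a' * b' + a' * c' + b' * c'"
    and "a * b * c = 1" "a' * b' * c' = 1"
  shows "a' \<in> {a, b, c}"
proof -
  have "a'^3 = (a + b + c) * a'^2 - (a * b + a * c + b * c) * a' + 1"
    using root_of_elementary_cubic[OF assms(4), of a'] assms(1,2) by simp
  then have "(a' - a) * (a' - b) * (a' - c) = 0"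
    using assms(3) by (simp add: algebra_simps power2_eq_square power3_eq_cube)
  then show ?thesis by auto
qed

lemma power_sum_roots:
  assumes "a * b * c = 1"
  shows "power_sum n (a + b + c) (a * b + a * c + b * c) = a^n + b^n + c^n"
proof (induction n rule: nat_induct3)
  case (step n)
  let ?X = "a + b + c" and ?Y = "a * b + a * c + b * c"
  have rec: "z ^ Suc (Suc (Suc n)) = ?X * z ^ Suc (Suc n) - ?Y * z ^ Suc n + z ^ n"
    if "z \<in> {a, b, c}" for z
    using arg_cong[OF root_of_elementary_cubic[OF assms that], of "\<lambda>w. w * z^n"]
    by (simp add: algebra_simps power2_eq_square power3_eq_cube)
  have "power_sum (Suc (Suc (Suc n))) ?X ?Y =
      (?X * a ^ Suc (Suc n) - ?Y * a ^ Suc n + a ^ n) + (?X * b ^ Suc (Suc n) - ?Y * b ^ Suc n + b ^ n)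
      + (?X * c ^ Suc (Suc n) - ?Y * c ^ Suc n + c ^ n)"
    by (simp only: power_sum.simps step) (simp only: algebra_simps)
  then show ?case
    using rec[of a] rec[of b] rec[of c] by simp
qed (simp_all add: eval_nat_numeral algebra_simps)

(* (a^n - b^n) / (a - b), written without division so that it is meaningful at a = b. *)
fun pow_diff_quot :: "nat \<Rightarrow> 'a::comm_ring_1 \<Rightarrow> 'a \<Rightarrow> 'a" where
  "pow_diff_quot 0 a b = 0"
| "pow_diff_quot (Suc 0) a b = 1"
| "pow_diff_quot (Suc (Suc n)) a b = (a + b) * pow_diff_quot (Suc n) a b - a * b * pow_diff_quot n a b"

lemma pow_diff_quot_mult: "(a - b) * pow_diff_quot n a b = a^n - b^n"
proof (induction n a b rule: pow_diff_quot.induct)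
  case (3 n a b)
  have "(a - b) * pow_diff_quot (Suc (Suc n)) a b =
      (a + b) * ((a - b) * pow_diff_quot (Suc n) a b) - a * b * ((a - b) * pow_diff_quot n a b)"
    by (simp add: algebra_simps)
  then show ?case
    unfolding 3 by (simp add: algebra_simps)
qed simp_all

lemma pow_diff_quot_diag: "a * pow_diff_quot n a a = of_nat n * a^n"
proof (induction n rule: nat_induct3)
  case (step n)
  have "a * pow_diff_quot (Suc (Suc (Suc n))) a a =
      2 * a * (a * pow_diff_quot (Suc (Suc n)) a a) - a * a * (a * pow_diff_quot (Suc n) a a)"
    by (simp add: algebra_simps)
  then show ?case
    unfolding step by (simp add: algebra_simps)
qed (simp_all add: numeral_2_eq_2 algebra_simps)

lemma complete_hom_roots:
  assumes X: "X = a + b + c" and Y: "Y = a * b + a * c + b * c" and prod: "a * b * c = 1"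
  shows "complete_hom (Suc n) X Y - c * complete_hom n X Y = pow_diff_quot n a b"
proof (induction n rule: nat_induct3)
  case (step n)
  let ?q = "\<lambda>k. complete_hom (Suc k) X Y - c * complete_hom k X Y"
  have "?q (Suc (Suc (Suc n))) =
      (X - c) * complete_hom (Suc (Suc (Suc n))) X Y - Y * complete_hom (Suc (Suc n)) X Y
      + (a * b * c) * complete_hom (Suc n) X Y"
    using prod by (simp add: algebra_simps)
  also have "\<dots> = (a + b) * ?q (Suc (Suc n)) - a * b * ?q (Suc n)"
    using X Y by (simp add: algebra_simps)
  also have "\<dots> = pow_diff_quot (Suc (Suc (Suc n))) a b"
    by (simp only: step pow_diff_quot.simps(3))
  finally show ?case .
qed (simp_all add: numeral_2_eq_2 X)

lemma folding_partial_roots: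
  assumes X: "X = a + b + c" and Y: "Y = a * b + a * c + b * c" and prod: "a * b * c = 1"
  shows "folding_partial d X Y + c * folding_partial d Y X =
    pow_diff_quot d a b + c * pow_diff_quot d (inverse a) (inverse b)"
proof -
  have "complete_hom (Suc d) X Y - c * complete_hom d X Y = pow_diff_quot d a b"
    by (rule complete_hom_roots[OF X Y prod])
  moreover have "complete_hom (Suc d) Y X - inverse c * complete_hom d Y X = pow_diff_quot d (inverse a) (inverse b)"
    by (rule complete_hom_roots) (use elementary_symmetric_inverse[OF prod] X Y in auto)
  moreover have "c \<noteq> 0"
    using prod by auto
  ultimately show ?thesis
    unfolding folding_partial_def by (auto simp: field_simps)
qed

lemma folding_partial_roots_diff:
  assumes X: "X = a + b + c" and Y: "Y = a * b + a * c + b * c" and prod: "a * b * c = 1"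
  shows "(a - b) * (folding_partial d X Y + c * folding_partial d Y X) =
    (a^d - inverse a ^ d) - (b^d - inverse b ^ d)"
proof -
  let ?q = "pow_diff_quot d (inverse a) (inverse b)"
  have ca: "c * (a - b) = - (inverse a - inverse b)"
    using inverse_eq_of_prod3[OF prod] by (simp add: algebra_simps)
  have "(a - b) * (folding_partial d X Y + c * folding_partial d Y X) = (a - b) * (pow_diff_quot d a b + c * ?q)"
    by (simp only: folding_partial_roots[OF X Y prod])
  also have "\<dots> = (a - b) * pow_diff_quot d a b + (c * (a - b)) * ?q"
    by (simp add: algebra_simps)
  also have "\<dots> = (a - b) * pow_diff_quot d a b - (inverse a - inverse b) * ?q"
    unfolding ca by (simp only: mult_minus_left diff_conv_add_uminus)
  finally show ?thesis
    by (simp add: pow_diff_quot_mult)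
qed

lemma folding_partial_roots_double:
  assumes X: "X = a + a + c" and Y: "Y = a * a + a * c + a * c" and prod: "a * a * c = 1"
    and d: "d \<ge> 1" and vanish: "folding_partial d X Y + c * folding_partial d Y X = 0"
  shows "a^d - inverse a ^ d \<noteq> c^d - inverse c ^ d"
proof
  assume eq: "a^d - inverse a ^ d = c^d - inverse c ^ d"
  have inv: "inverse a = a * c" "inverse c = a * a"
    using inverse_eq_of_prod3[OF prod] by simp_all
  have "0 = a * (pow_diff_quot d a a + c * pow_diff_quot d (inverse a) (inverse a))"
    using vanish folding_partial_roots[OF X Y prod] by simp
  also have "\<dots> = a * pow_diff_quot d a a + inverse a * pow_diff_quot d (inverse a) (inverse a)"
    using inv by (simp add: algebra_simps)
  also have "\<dots> = of_nat d * (a^d + inverse a ^ d)"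
    by (simp add: pow_diff_quot_diag algebra_simps)
  finally have opp: "inverse a ^ d = - (a^d)"
    using d by (simp add: add_eq_0_iff)
  have "inverse a * inverse a = (a * a * c) * c"
    using inv by (simp add: algebra_simps)
  then have "c^d = inverse a ^ d * inverse a ^ d"
    using prod by (simp flip: power_mult_distrib)
  moreover have "inverse c ^ d = a^d * a^d"
    using inv by (simp add: power_mult_distrib)
  ultimately have "a^d - inverse a ^ d = 0"
    using eq opp by simp
  then have "a^d = 0"
    using opp by simp
  then show False
    using prod by auto
qed

lemma folding_partials_vanish_iff:
  assumes X: "X = a + b + c" and Y: "Y = a * b + a * c + b * c" and prod: "a * b * c = 1"
    and d: "d \<ge> 1"
  shows "folding_partial d X Y = 0 \<and> folding_partial d Y X = 0 \<longleftrightarrow>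
    distinct [a, b, c] \<and> a^d - inverse a ^ d = b^d - inverse b ^ d \<and> a^d - inverse a ^ d = c^d - inverse c ^ d"
    (is "_ \<longleftrightarrow> _ \<and> ?w a = ?w b \<and> ?w a = ?w c")
proof -
  let ?K = "\<lambda>z. folding_partial d X Y + z * folding_partial d Y X"
  have X': "X = a + c + b" and Y': "Y = a * c + a * b + c * b" and prod': "a * c * b = 1"
    using X Y prod by (simp_all add: ac_simps)
  have diff_c: "(a - b) * ?K c = ?w a - ?w b"
    by (rule folding_partial_roots_diff[OF X Y prod])
  have diff_b: "(a - c) * ?K b = ?w a - ?w c"
    by (rule folding_partial_roots_diff[OF X' Y' prod'])
  show ?thesis
  proof
    assume vanish: "folding_partial d X Y = 0 \<and> folding_partial d Y X = 0"
    then have w: "?w a = ?w b" "?w a = ?w c"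
      using diff_c diff_b by simp_all
    have "a \<noteq> b"
    proof
      assume "a = b"
      then have "?w a \<noteq> ?w c"
        using X Y prod vanish by (intro folding_partial_roots_double[OF _ _ _ d]) auto
      with w show False by simp
    qed
    moreover have "a \<noteq> c"
    proof
      assume "a = c"
      then have "?w a \<noteq> ?w b"
        using X Y prod vanish by (intro folding_partial_roots_double[OF _ _ _ d]) (auto simp: ac_simps)
      with w show False by simp
    qed
    moreover have "b \<noteq> c"
    proof
      assume "b = c"
      then have "?w b \<noteq> ?w a"
        using X Y prod vanish by (intro folding_partial_roots_double[OF _ _ _ d]) (auto simp: ac_simps)
      with w show False by simp
    qed
    ultimately show "distinct [a, b, c] \<and> ?w a = ?w b \<and> ?w a = ?w c"
      using w by simp
  next
    assume "distinct [a, b, c] \<and> ?w a = ?w b \<and> ?w a = ?w c"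
    then have "?K c = 0" "?K b = 0" "c \<noteq> b"
      using diff_c diff_b by auto
    moreover have "(c - b) * folding_partial d Y X = ?K c - ?K b"
      by (simp add: algebra_simps)
    ultimately show "folding_partial d X Y = 0 \<and> folding_partial d Y X = 0"
      by simp
  qed
qed

section \<open>Critical points and critical values\<close>

lemma diff_inverse_eq_iff:
  fixes u v :: "'a::field"
  assumes "u \<noteq> 0" "v \<noteq> 0"
  shows "u - inverse u = v - inverse v \<longleftrightarrow> u = v \<or> u * v = -1"
proof -
  have "u - inverse u - (v - inverse v) = (u - v) * (u * v + 1) / (u * v)"
    using assms by (simp add: field_simps)
  then show ?thesis
    using assms by (auto simp: eq_neg_iff_add_eq_0)
qed

lemma diff_inverse_eq3_iff:
  fixes u v w :: "'a::field"
  assumes prod: "u * v * w = 1"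
  shows "u - inverse u = v - inverse v \<and> u - inverse u = w - inverse w \<longleftrightarrow>
    (u = v \<and> v = w \<and> u^3 = 1) \<or> (u, v, w) \<in> {(-1, -1, 1), (-1, 1, -1), (1, -1, -1)}"
proof
  assume eq: "u - inverse u = v - inverse v \<and> u - inverse u = w - inverse w"
  have nz: "u \<noteq> 0" "v \<noteq> 0" "w \<noteq> 0"
    using prod by auto
  have uv: "u = v \<or> u * v = -1" and uw: "u = w \<or> u * w = -1"
    using eq diff_inverse_eq_iff[OF nz(1,2)] diff_inverse_eq_iff[OF nz(1,3)] by auto
  show "(u = v \<and> v = w \<and> u^3 = 1) \<or> (u, v, w) \<in> {(-1, -1, 1), (-1, 1, -1), (1, -1, -1)}"
  proof (cases "u = v"; cases "u = w")
    assume "u = v" "u = w"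
    then show ?thesis
      using prod by (simp add: power3_eq_cube)
  next
    assume "u = v" "u \<noteq> w"
    then have "u * w = -1" "u * (u * w) = 1"
      using uw prod by (simp_all add: mult.assoc)
    then have "u = -1" "w = 1"
      by (auto simp: minus_equation_iff)
    then show ?thesis
      using \<open>u = v\<close> by simp
  next
    assume "u \<noteq> v" "u = w"
    then have "u * v = -1" "u * (u * v) = 1"
      using uv prod by (simp_all add: ac_simps)
    then have "u = -1" "v = 1"
      by (auto simp: minus_equation_iff)
    then show ?thesis
      using \<open>u = w\<close> by simp
  next
    assume "u \<noteq> v" "u \<noteq> w"
    then have "u * v = -1" "u * w = -1"
      using uv uw by simp_all
    moreover from this have "w = -1"
      using prod by (simp add: minus_equation_iff)
    ultimately have "u = 1" "v = -1"
      by (auto simp: minus_equation_iff)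
    then show ?thesis
      using \<open>w = -1\<close> by simp
  qed
qed auto

definition root_point :: "complex \<times> complex \<times> complex \<Rightarrow> complex \<times> complex" where
  "root_point = (\<lambda>(a, b, c). let X = a + b + c; Y = a * b + a * c + b * c in ((X + Y) / 2, (X - Y) / (2 * \<i>)))"

lemma root_point_iff:
  "(x, y) = root_point (a, b, c) \<longleftrightarrow> x + \<i> * y = a + b + c \<and> x - \<i> * y = a * b + a * c + b * c"
proof -
  have "(x, y) = ((X + Y) / 2, (X - Y) / (2 * \<i>)) \<longleftrightarrow> x + \<i> * y = X \<and> x - \<i> * y = Y" for X Y
  proof
    assume "(x, y) = ((X + Y) / 2, (X - Y) / (2 * \<i>))"
    then have "x = (X + Y) / 2" "\<i> * y = (X - Y) / 2"
      by (simp_all add: field_simps)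
    then show "x + \<i> * y = X \<and> x - \<i> * y = Y"
      by (simp add: diff_divide_distrib add_divide_distrib)
  next
    assume "x + \<i> * y = X \<and> x - \<i> * y = Y"
    then have "X = x + \<i> * y" "Y = x - \<i> * y"
      by simp_all
    then show "(x, y) = ((X + Y) / 2, (X - Y) / (2 * \<i>))"
      by (simp add: field_simps)
  qed
  from this[of "a + b + c" "a * b + a * c + b * c"] show ?thesis
    by (simp only: root_point_def Let_def prod.case)
qed

lemma root_point_exists:
  obtains a b c where "a * b * c = 1" "(x, y) = root_point (a, b, c)"
proof -
  obtain a b c where "a + b + c = x + \<i> * y" "a * b + a * c + b * c = x - \<i> * y" "a * b * c = 1"
    by (rule cubic_roots_exist)
  then show thesis
    using that[of a b c] by (simp add: root_point_iff)
qed

lemma crit_points_root_point_iff: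
  assumes pt: "(x, y) = root_point (a, b, c)" and prod: "a * b * c = 1" and d: "d \<ge> 1"
  shows "(x, y) \<in> crit_points (folding_A2_R d) \<longleftrightarrow> distinct [a, b, c] \<and>
    ((a^d = b^d \<and> b^d = c^d \<and> (a^d)^3 = 1) \<or> (a^d, b^d, c^d) \<in> {(-1, -1, 1), (-1, 1, -1), (1, -1, -1)})"
proof -
  have X: "x + \<i> * y = a + b + c" and Y: "x - \<i> * y = a * b + a * c + b * c"
    using pt by (simp_all add: root_point_iff)
  have "a^d * b^d * c^d = 1"
    using prod by (simp flip: power_mult_distrib)
  then show ?thesis
    unfolding crit_points_folding_A2_R_iff[OF d] folding_partials_vanish_iff[OF X Y prod d]
    by (simp add: power_inverse diff_inverse_eq3_iff)
qed

lemma folding_A2_R_root_point: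
  assumes pt: "(x, y) = root_point (a, b, c)" and prod: "a * b * c = 1" and d: "d \<ge> 1"
  shows "folding_A2_R d x y = 2 + (a^d + b^d + c^d) + (inverse (a^d) + inverse (b^d) + inverse (c^d))"
proof -
  have X: "x + \<i> * y = a + b + c" and Y: "x - \<i> * y = a * b + a * c + b * c"
    using pt by (simp_all add: root_point_iff)
  have "power_sum d (a * b + a * c + b * c) (a + b + c) = inverse a ^ d + inverse b ^ d + inverse c ^ d"
    using power_sum_roots[of "inverse a" "inverse b" "inverse c" d] elementary_symmetric_inverse[OF prod]
    by simp
  then show ?thesis
    by (simp add: folding_A2_R_def folding_A2_eq_power_sum[OF d] X Y power_sum_roots[OF prod] power_inverse)
qed

lemma cube_root_of_unity_value:
  fixes u :: "'a::field"
  assumes "u^3 = 1"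
  shows "2 + (u + u + u) + (inverse u + inverse u + inverse u) = (if u = 1 then 8 else -1)"
proof -
  have inv: "inverse u = u^2"
    using assms by (intro inverse_unique) (simp add: power2_eq_square power3_eq_cube mult.assoc)
  have factor: "(u - 1) * (u^2 + u + 1) = 0"
    using assms by (simp add: power2_eq_square power3_eq_cube algebra_simps)
  have sum_eq: "2 + (u + u + u) + (inverse u + inverse u + inverse u) = 3 * (u^2 + u + 1) - 1"
    unfolding inv by (simp add: algebra_simps)
  show ?thesis
  proof (cases "u = 1")
    case False
    with factor have "u^2 + u + 1 = 0"
      by simp
    then show ?thesis
      unfolding sum_eq using False by simp
  qed simp
qed

lemma crit_point_cases:
  assumes crit: "(x, y) \<in> crit_points (folding_A2_R d)" and d: "d \<ge> 1"
  obtains (equal_powers) a b c where "(x, y) = root_point (a, b, c)" "a * b * c = 1" "distinct [a, b, c]"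
      "a^d = b^d" "b^d = c^d" "(a^d)^3 = 1" "folding_A2_R d x y = (if a^d = 1 then 8 else -1)"
  | (signs) a b c where "(x, y) = root_point (a, b, c)" "a * b * c = 1" "distinct [a, b, c]"
      "(a^d, b^d, c^d) \<in> {(-1, -1, 1), (-1, 1, -1), (1, -1, -1)}" "folding_A2_R d x y = 0"
proof -
  obtain a b c where pt: "(x, y) = root_point (a, b, c)" and prod: "a * b * c = 1"
    by (rule root_point_exists)
  note crit_iff = crit_points_root_point_iff[OF pt prod d]
  note val = folding_A2_R_root_point[OF pt prod d]
  consider "distinct [a, b, c]" "a^d = b^d" "b^d = c^d" "(a^d)^3 = 1"
    | "distinct [a, b, c]" "(a^d, b^d, c^d) \<in> {(-1, -1, 1), (-1, 1, -1), (1, -1, -1)}"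
    using crit crit_iff by blast
  then show thesis
  proof cases
    case 1
    then show thesis
      using equal_powers[OF pt prod] val cube_root_of_unity_value[of "a^d"] by simp
  next
    case 2
    then show thesis
      using signs[OF pt prod] val by auto
  qed
qed

lemma norm_eq_1_if_power:
  fixes z :: "'a::real_normed_div_algebra"
  assumes "norm (z ^ n) = 1" "n > 0"
  shows "norm z = 1"
proof -
  have "norm z ^ n = 1 ^ n"
    using assms(1) by (simp add: norm_power)
  then show ?thesis
    by (rule power_eq_imp_eq_base) (use assms(2) in auto)
qed

lemma root_point_real:
  assumes pt: "(x, y) = root_point (a, b, c)" and prod: "a * b * c = 1"
    and norms: "norm a = 1" "norm b = 1" "norm c = 1"
  shows "x \<in> \<real> \<and> y \<in> \<real>"
proof -
  have "inverse z = cnj z" if "norm z = 1" for z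
    using that by (intro inverse_unique) (simp add: complex_mult_cnj cmod_def power2_eq_square)
  then have "a * b + a * c + b * c = cnj (a + b + c)"
    using norms inverse_eq_of_prod3[OF prod] by (simp add: algebra_simps)
  then have "x + \<i> * y = a + b + c" "x - \<i> * y = cnj (a + b + c)"
    using pt by (simp_all add: root_point_iff)
  then have "x = of_real (Re (a + b + c))" "y = of_real (Im (a + b + c))"
    by (auto simp: complex_eq_iff)
  then show ?thesis
    by simp
qed

lemma crit_points_real:
  assumes "(x, y) \<in> crit_points (folding_A2_R d)" "d \<ge> 1"
  shows "x \<in> \<real> \<and> y \<in> \<real>"
  using assms
proof (cases rule: crit_point_cases)
  case (equal_powers a b c)
  have "norm z = 1" if "z \<in> {a, b, c}" for z
  proof (rule norm_eq_1_if_power)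
    show "norm (z ^ (d * 3)) = 1"
      using that equal_powers by (auto simp: power_mult)
  qed (use assms(2) in simp)
  then show ?thesis
    using equal_powers by (intro root_point_real) auto
next
  case (signs a b c)
  have "norm z = 1" if "z \<in> {a, b, c}" for z
  proof (rule norm_eq_1_if_power)
    show "norm (z ^ d) = 1"
      using that signs by auto
  qed (use assms(2) in simp)
  then show ?thesis
    using signs by (intro root_point_real) auto
qed

section \<open>Counting the critical points\<close>

lemma card_eq_mult_card_image:
  assumes fin: "finite S" and fibres: "\<And>x. x \<in> S \<Longrightarrow> card {y \<in> S. f y = f x} = k"
  shows "card S = k * card (f ` S)"
proof -
  have "card S = card (\<Union>z \<in> f ` S. {y \<in> S. f y = z})"
    by (rule arg_cong[of _ _ card]) auto
  also have "\<dots> = (\<Sum>z \<in> f ` S. card {y \<in> S. f y = z})"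
    using fin by (intro card_UN_disjoint) auto
  also have "\<dots> = (\<Sum>z \<in> f ` S. k)"
    using fibres by (intro sum.cong) auto
  finally show ?thesis
    by simp
qed

definition triple_perms :: "'a \<times> 'a \<times> 'a \<Rightarrow> ('a \<times> 'a \<times> 'a) set" where
  "triple_perms = (\<lambda>(a, b, c). {(a, b, c), (a, c, b), (b, a, c), (b, c, a), (c, a, b), (c, b, a)})"

lemma card_triple_perms: "distinct [a, b, c] \<Longrightarrow> card (triple_perms (a, b, c)) = 6"
  by (simp add: triple_perms_def)

lemma root_point_triple_perms: "t \<in> triple_perms (a, b, c) \<Longrightarrow> root_point t = root_point (a, b, c)"
  by (auto simp: triple_perms_def root_point_def Let_def ac_simps)

lemma root_point_eq_iff:
  assumes prod: "a * b * c = 1" and prod': "a' * b' * c' = 1" and dist: "distinct [a', b', c']"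
  shows "root_point (a', b', c') = root_point (a, b, c) \<longleftrightarrow> (a', b', c') \<in> triple_perms (a, b, c)"
proof
  assume eq: "root_point (a', b', c') = root_point (a, b, c)"
  obtain x y where pt: "(x, y) = root_point (a, b, c)"
    by (metis surj_pair)
  have X: "a + b + c = a' + b' + c'" and Y: "a * b + a * c + b * c = a' * b' + a' * c' + b' * c'"
    using pt eq root_point_iff[of x y] by (metis (no_types, lifting))+
  have "a' \<in> {a, b, c}"
    by (rule root_of_elementary_cubic_unique[OF X Y prod prod'])
  moreover have "b' \<in> {a, b, c}"
    by (rule root_of_elementary_cubic_unique[of a b c b' a' c', OF _ _ prod]) (use X Y prod' in \<open>simp_all only: ac_simps\<close>)
  moreover have "c' \<in> {a, b, c}"
    by (rule root_of_elementary_cubic_unique[of a b c c' a' b', OF _ _ prod]) (use X Y prod' in \<open>simp_all only: ac_simps\<close>)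
  ultimately show "(a', b', c') \<in> triple_perms (a, b, c)"
    using dist by (auto simp: triple_perms_def)
qed (rule root_point_triple_perms)

definition neg_one_root_pairs :: "nat \<Rightarrow> (complex \<times> complex) set" where
  "neg_one_root_pairs d = {(p, q). p^d = -1 \<and> q^d = -1 \<and> p \<noteq> q}"

definition root_point_of_pair :: "complex \<times> complex \<Rightarrow> complex \<times> complex" where
  "root_point_of_pair = (\<lambda>(p, q). root_point (p, q, inverse (p * q)))"

lemma neg_one_roots_triple:
  fixes p q :: complex
  assumes "p^d = -1" "q^d = -1" "p \<noteq> q"
  shows "p * q * inverse (p * q) = 1" "inverse (p * q) ^ d = 1" "distinct [p, q, inverse (p * q)]"
proof -
  show "inverse (p * q) ^ d = 1"
    using assms by (simp add: power_inverse power_mult_distrib)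
  then show "distinct [p, q, inverse (p * q)]"
    using assms by auto
  have "p \<noteq> 0" "q \<noteq> 0"
    using assms(1,2) by (auto simp: power_0_left split: if_splits)
  then show "p * q * inverse (p * q) = 1"
    by (intro right_inverse) simp
qed

lemma root_point_sign_pattern:
  assumes prod: "a * b * c = 1" and dist: "distinct [a, b, c]"
    and signs: "(a^d, b^d, c^d) \<in> {(-1, -1, 1), (-1, 1, -1), (1, -1, -1)}"
  shows "root_point (a, b, c) \<in> root_point_of_pair ` neg_one_root_pairs d"
proof -
  have perm: "root_point (a, b, c) = root_point t" if "t \<in> triple_perms (a, b, c)" for t
    using root_point_triple_perms[OF that] by simp
  have inv: "inverse (b * c) = a" "inverse (a * c) = b" "inverse (a * b) = c"
    by (rule inverse_unique, use prod in \<open>simp add: ac_simps\<close>)+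
  from signs consider "a^d = -1" "b^d = -1" | "a^d = -1" "c^d = -1" | "b^d = -1" "c^d = -1"
    by auto
  then show ?thesis
  proof cases
    case 1
    then have "(a, b) \<in> neg_one_root_pairs d"
      using dist by (simp add: neg_one_root_pairs_def)
    moreover have "root_point (a, b, c) = root_point_of_pair (a, b)"
      using inv(3) by (simp add: root_point_of_pair_def)
    ultimately show ?thesis
      by simp
  next
    case 2
    then have "(a, c) \<in> neg_one_root_pairs d"
      using dist by (simp add: neg_one_root_pairs_def)
    moreover have "root_point (a, b, c) = root_point_of_pair (a, c)"
      using inv(2) perm[of "(a, c, b)"] by (simp add: root_point_of_pair_def triple_perms_def)
    ultimately show ?thesis
      by simp
  next
    case 3
    then have "(b, c) \<in> neg_one_root_pairs d"
      using dist by (simp add: neg_one_root_pairs_def)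
    moreover have "root_point (a, b, c) = root_point_of_pair (b, c)"
      using inv(1) perm[of "(b, c, a)"] by (simp add: root_point_of_pair_def triple_perms_def)
    ultimately show ?thesis
      by simp
  qed
qed

lemma crit_level_zero:
  assumes d: "d \<ge> 1"
  shows "{(x, y) \<in> crit_points (folding_A2_R d). folding_A2_R d x y = 0} =
    root_point_of_pair ` neg_one_root_pairs d"
    (is "?L = _")
proof (intro equalityI subsetI)
  fix p
  assume "p \<in> ?L"
  then obtain x y where p: "p = (x, y)" and crit: "(x, y) \<in> crit_points (folding_A2_R d)"
    and val: "folding_A2_R d x y = 0"
    by auto
  from crit d show "p \<in> root_point_of_pair ` neg_one_root_pairs d"
  proof (cases rule: crit_point_cases)
    case equal_powers
    then show ?thesis
      using val by (simp split: if_splits)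
  next
    case (signs a b c)
    then show ?thesis
      using p root_point_sign_pattern by simp
  qed
next
  fix p
  assume "p \<in> root_point_of_pair ` neg_one_root_pairs d"
  then obtain a b where ab: "a^d = -1" "b^d = -1" "a \<noteq> b" and p: "p = root_point (a, b, inverse (a * b))"
    by (auto simp: neg_one_root_pairs_def root_point_of_pair_def)
  note triple = neg_one_roots_triple[OF ab]
  obtain x y where pt: "(x, y) = root_point (a, b, inverse (a * b))"
    by (metis surj_pair)
  have "(x, y) \<in> crit_points (folding_A2_R d)"
    using ab triple crit_points_root_point_iff[OF pt triple(1) d] by simp
  moreover have "folding_A2_R d x y = 0"
    using ab triple folding_A2_R_root_point[OF pt triple(1) d] by simp
  ultimately show "p \<in> ?L"
    using p pt by auto
qed

lemma card_neg_one_root_pairs: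
  assumes d: "d \<ge> 1"
  shows "finite (neg_one_root_pairs d)" "card (neg_one_root_pairs d) = d * d - d"
proof -
  define R where "R = {p :: complex. p^d = -1}"
  have R: "finite R" "card R = d"
    using d by (auto simp: R_def intro: card_nth_roots)
  have eq: "neg_one_root_pairs d = R \<times> R - (\<lambda>p. (p, p)) ` R"
    by (auto simp: R_def neg_one_root_pairs_def)
  have diag: "card ((\<lambda>p. (p, p)) ` R) = card R"
    by (simp add: card_image inj_on_def)
  show "finite (neg_one_root_pairs d)"
    unfolding eq using R by simp
  show "card (neg_one_root_pairs d) = d * d - d"
    unfolding eq using R diag by (subst card_Diff_subset) (auto simp: card_cartesian_product)
qed

lemma root_point_of_pair_fibre:
  assumes t: "(p, q) \<in> neg_one_root_pairs d"
  shows "{s \<in> neg_one_root_pairs d. root_point_of_pair s = root_point_of_pair (p, q)} = {(p, q), (q, p)}"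
proof (intro equalityI subsetI)
  have pq: "p^d = -1" "q^d = -1" "p \<noteq> q"
    using t by (simp_all add: neg_one_root_pairs_def)
  note triple = neg_one_roots_triple[OF pq]
  fix s
  assume "s \<in> {s \<in> neg_one_root_pairs d. root_point_of_pair s = root_point_of_pair (p, q)}"
  then obtain p' q' where s: "s = (p', q')" and pq': "p'^d = -1" "q'^d = -1" "p' \<noteq> q'"
    and eq: "root_point (p', q', inverse (p' * q')) = root_point (p, q, inverse (p * q))"
    by (auto simp: neg_one_root_pairs_def root_point_of_pair_def)
  note triple' = neg_one_roots_triple[OF pq']
  have "(p', q', inverse (p' * q')) \<in> triple_perms (p, q, inverse (p * q))"
    using eq root_point_eq_iff[OF triple(1) triple'(1,3)] by simp
  then show "s \<in> {(p, q), (q, p)}"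
    using s pq pq' triple(2) triple'(2) by (auto simp: triple_perms_def)
next
  fix s
  assume "s \<in> {(p, q), (q, p)}"
  moreover have "root_point_of_pair (q, p) = root_point_of_pair (p, q)"
    using root_point_triple_perms[of "(q, p, inverse (p * q))" p q "inverse (p * q)"]
    by (simp add: root_point_of_pair_def triple_perms_def mult.commute)
  ultimately show "s \<in> {s \<in> neg_one_root_pairs d. root_point_of_pair s = root_point_of_pair (p, q)}"
    using t by (auto simp: neg_one_root_pairs_def)
qed

lemma card_crit_level_zero:
  assumes d: "d \<ge> 1"
  shows "finite {(x, y) \<in> crit_points (folding_A2_R d). folding_A2_R d x y = 0}"
    and "card {(x, y) \<in> crit_points (folding_A2_R d). folding_A2_R d x y = 0} = d choose 2"
proof -
  have "card (neg_one_root_pairs d) = 2 * card (root_point_of_pair ` neg_one_root_pairs d)"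
  proof (rule card_eq_mult_card_image)
    fix t
    assume "t \<in> neg_one_root_pairs d"
    moreover obtain p q where "t = (p, q)"
      by (cases t)
    ultimately show "card {s \<in> neg_one_root_pairs d. root_point_of_pair s = root_point_of_pair t} = 2"
      using root_point_of_pair_fibre by (auto simp: neg_one_root_pairs_def)
  qed (rule card_neg_one_root_pairs(1)[OF d])
  then show "finite {(x, y) \<in> crit_points (folding_A2_R d). folding_A2_R d x y = 0}"
    and "card {(x, y) \<in> crit_points (folding_A2_R d). folding_A2_R d x y = 0} = d choose 2"
    using card_neg_one_root_pairs[OF d] unfolding crit_level_zero[OF d]
    by (simp_all add: choose_two diff_mult_distrib2 mult.commute)
qed

(* The name refers to the primitive cube roots of unity omega: a \<in> omega_roots d iff a^d is one
   of them, and omega_triples d collects the root triples with a common such d-th power. *)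
definition omega_roots :: "nat \<Rightarrow> complex set" where
  "omega_roots d = {a. (a^d)^3 = 1 \<and> a^d \<noteq> 1}"

definition omega_triples :: "nat \<Rightarrow> (complex \<times> complex \<times> complex) set" where
  "omega_triples d = {(a, b, c). a * b * c = 1 \<and> a^d = b^d \<and> b^d = c^d \<and> (a^d)^3 = 1 \<and> a^d \<noteq> 1}"

lemma crit_level_neg_one:
  assumes d: "d \<ge> 1"
  shows "{(x, y) \<in> crit_points (folding_A2_R d). folding_A2_R d x y = -1} =
    root_point ` {(a, b, c) \<in> omega_triples d. distinct [a, b, c]}"
    (is "?L = root_point ` ?D")
proof (intro equalityI subsetI)
  fix p
  assume "p \<in> ?L"
  then obtain x y where p: "p = (x, y)" and crit: "(x, y) \<in> crit_points (folding_A2_R d)"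
    and val: "folding_A2_R d x y = -1"
    by auto
  from crit d show "p \<in> root_point ` ?D"
  proof (cases rule: crit_point_cases)
    case (equal_powers a b c)
    then have "(a, b, c) \<in> ?D"
      using val by (auto simp: omega_triples_def split: if_splits)
    then show ?thesis
      unfolding p equal_powers(1) by (rule imageI)
  next
    case signs
    then show ?thesis
      using val by simp
  qed
next
  fix p
  assume "p \<in> root_point ` ?D"
  then obtain a b c where t: "(a, b, c) \<in> omega_triples d" "distinct [a, b, c]"
    and p: "p = root_point (a, b, c)"
    by auto
  obtain x y where pt: "(x, y) = root_point (a, b, c)"
    by (metis surj_pair)
  have "(x, y) \<in> crit_points (folding_A2_R d)"
    using t crit_points_root_point_iff[OF pt _ d] by (auto simp: omega_triples_def)
  moreover have "folding_A2_R d x y = -1"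
    using t folding_A2_R_root_point[OF pt _ d] cube_root_of_unity_value[of "a^d"]
    by (auto simp: omega_triples_def)
  ultimately show "p \<in> ?L"
    using p pt by auto
qed

lemma card_omega_roots:
  assumes d: "d \<ge> 1"
  shows "finite (omega_roots d)" "card (omega_roots d) = 2 * d"
proof -
  have eq: "omega_roots d = {a. a ^ (d * 3) = 1} - {a. a^d = 1}"
    by (auto simp: omega_roots_def power_mult)
  have fin: "finite {a :: complex. a ^ (d * 3) = 1}" "finite {a :: complex. a^d = 1}"
    using d by auto
  show "finite (omega_roots d)"
    unfolding eq using fin by simp
  have "{a :: complex. a^d = 1} \<subseteq> {a. a ^ (d * 3) = 1}"
    by (auto simp: power_mult)
  then show "card (omega_roots d) = 2 * d"
    unfolding eq using d fin by (simp add: card_Diff_subset card_nth_roots)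
qed

lemma omega_roots_nonzero:
  assumes "a \<in> omega_roots d"
  shows "a \<noteq> 0" "d \<noteq> 0"
proof -
  show d: "d \<noteq> 0"
  proof
    assume "d = 0"
    with assms show False
      by (simp add: omega_roots_def)
  qed
  show "a \<noteq> 0"
    using assms d by (auto simp: omega_roots_def power_0_left)
qed

lemma inverse_mult_power_eq_cube_root:
  fixes a b u :: "'a::field"
  assumes "a^d = u" "b^d = u" "u^3 = 1"
  shows "inverse (a * b) ^ d = u"
proof -
  have "inverse (a * b) ^ d = inverse (a^d * b^d)"
    by (simp only: power_inverse power_mult_distrib)
  also have "\<dots> = u"
    unfolding assms(1,2) using assms(3) by (intro inverse_unique) (simp add: power3_eq_cube mult.assoc)
  finally show ?thesis .
qed

lemma omega_triples_mem:
  "(a, b, c) \<in> omega_triples d \<longleftrightarrow> a \<in> omega_roots d \<and> b^d = a^d \<and> c = inverse (a * b)"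
proof
  assume t: "(a, b, c) \<in> omega_triples d"
  then have "inverse (a * b) = c"
    by (intro inverse_unique) (simp add: omega_triples_def)
  with t show "a \<in> omega_roots d \<and> b^d = a^d \<and> c = inverse (a * b)"
    by (auto simp: omega_triples_def omega_roots_def)
next
  assume h: "a \<in> omega_roots d \<and> b^d = a^d \<and> c = inverse (a * b)"
  then have "a \<noteq> 0" "d \<noteq> 0"
    using omega_roots_nonzero[of a d] by auto
  moreover from this have "b \<noteq> 0"
    using h by (auto simp: power_0_left)
  ultimately have "a * b * c = 1"
    using h by (simp del: inverse_mult_distrib)
  moreover have "c^d = a^d"
    using h inverse_mult_power_eq_cube_root[of a d "a^d" b] by (simp add: omega_roots_def)
  ultimately show "(a, b, c) \<in> omega_triples d"
    using h by (auto simp: omega_triples_def omega_roots_def)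
qed

lemma card_omega_triples:
  assumes d: "d \<ge> 1"
  shows "finite (omega_triples d)" "card (omega_triples d) = 2 * d * d"
proof -
  let ?f = "\<lambda>(a, b). (a, b, inverse (a * b))"
  let ?S = "SIGMA a : omega_roots d. {b. b^d = a^d}"
  have eq: "omega_triples d = ?f ` ?S"
    by (auto simp: omega_triples_mem image_iff)
  have fibres: "finite {b :: complex. b^d = a^d}" "card {b :: complex. b^d = a^d} = d"
    if "a \<in> omega_roots d" for a
    using d omega_roots_nonzero(1)[OF that] by (auto intro!: card_nth_roots)
  have "inj_on ?f ?S"
    by (auto simp: inj_on_def)
  then have "card (omega_triples d) = (\<Sum>a \<in> omega_roots d. card {b. b^d = a^d})"
    unfolding eq using card_omega_roots(1)[OF d] fibres(1) by (simp add: card_image)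
  then show "card (omega_triples d) = 2 * d * d"
    using fibres(2) card_omega_roots(2)[OF d] by simp
  show "finite (omega_triples d)"
    unfolding eq using card_omega_roots(1)[OF d] fibres(1) by auto
qed

lemma inverse_square_eq_iff:
  fixes a :: "'a::field"
  assumes "a \<noteq> 0"
  shows "inverse (a * a) = a \<longleftrightarrow> a^3 = 1"
proof
  assume "inverse (a * a) = a"
  then show "a^3 = 1"
    using assms by (simp add: power3_eq_cube field_simps)
next
  assume "a^3 = 1"
  then show "inverse (a * a) = a"
    by (intro inverse_unique) (simp add: power3_eq_cube mult.assoc)
qed

lemma omega_triples_degenerate:
  "{(a, b, c) \<in> omega_triples d. \<not> distinct [a, b, c]} =
     (\<lambda>a. (a, a, inverse (a * a))) ` omega_roots d \<union> (\<lambda>a. (a, inverse (a * a), a)) ` omega_roots d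
     \<union> (\<lambda>a. (inverse (a * a), a, a)) ` omega_roots d"
    (is "?N = ?N1 \<union> ?N2 \<union> ?N3")
proof (intro equalityI subsetI)
  fix t
  assume "t \<in> ?N"
  then obtain a b c where t: "t = (a, b, c)" and a: "a \<in> omega_roots d" and b: "b^d = a^d"
    and c: "c = inverse (a * b)" and degenerate: "a = b \<or> a = c \<or> b = c"
    by (auto simp: omega_triples_mem)
  have "a \<noteq> 0" "b \<noteq> 0"
    using omega_roots_nonzero[OF a] b by (auto simp: power_0_left)
  then consider "a = b" | "a = c" "b = inverse (a * a)" | "b = c" "a = inverse (b * b)"
    using degenerate c by (auto simp: field_simps)
  then show "t \<in> ?N1 \<union> ?N2 \<union> ?N3"
  proof cases
    case 1
    then show ?thesis
      using a c t by auto
  next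
    case 2
    then show ?thesis
      using a t by auto
  next
    case 3
    moreover have "b \<in> omega_roots d"
      using a b by (simp add: omega_roots_def)
    ultimately show ?thesis
      using t by auto
  qed
next
  fix t
  assume "t \<in> ?N1 \<union> ?N2 \<union> ?N3"
  then obtain a where a: "a \<in> omega_roots d"
    and t: "t = (a, a, inverse (a * a)) \<or> t = (a, inverse (a * a), a) \<or> t = (inverse (a * a), a, a)"
    by auto
  have a0: "a \<noteq> 0"
    using omega_roots_nonzero[OF a] by simp
  have pow: "inverse (a * a) ^ d = a^d"
    using a by (intro inverse_mult_power_eq_cube_root) (simp_all add: omega_roots_def)
  then have "inverse (a * a) \<in> omega_roots d"
    using a by (simp add: omega_roots_def)
  moreover have "inverse (a * inverse (a * a)) = a" "inverse (inverse (a * a) * a) = a"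
    using a0 by (simp_all add: field_simps)
  ultimately show "t \<in> ?N"
    using t a pow by (auto simp: omega_triples_mem)
qed

lemma cube_roots_with_nontrivial_power:
  "{a :: complex. a^3 = 1 \<and> a^d \<noteq> 1} = (if d mod 3 = 0 then {} else {a. a^3 = 1} - {1})"
proof -
  have pow: "a^d = a ^ (d mod 3)" if "a^3 = 1" for a :: complex
  proof -
    have "a^d = (a^3) ^ (d div 3) * a ^ (d mod 3)"
      by (simp flip: power_mult power_add)
    then show ?thesis
      using that by simp
  qed
  have square: "a^2 = 1 \<longleftrightarrow> a = 1" if "a^3 = 1" for a :: complex
  proof
    assume "a^2 = 1"
    then show "a = 1"
      using that by (simp add: power3_eq_cube power2_eq_square)
  qed simp
  consider "d mod 3 = 0" | "d mod 3 = 1" | "d mod 3 = 2"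
    by arith
  then show ?thesis
  proof cases
    case 1
    then show ?thesis
      using pow by auto
  next
    case 2
    then show ?thesis
      using pow by auto
  next
    case 3
    then show ?thesis
      using pow square by auto
  qed
qed

lemma card_cube_roots_with_nontrivial_power:
  "card {a :: complex. a^3 = 1 \<and> a^d \<noteq> 1} = (if d mod 3 = 0 then 0 else 2)"
proof -
  have "card ({a :: complex. a^3 = 1} - {1}) = 2"
    by (simp add: card_nth_roots)
  then show ?thesis
    by (simp add: cube_roots_with_nontrivial_power)
qed

lemma card_omega_triples_degenerate:
  assumes d: "d \<ge> 1"
  shows "finite {(a, b, c) \<in> omega_triples d. \<not> distinct [a, b, c]}"
    and "card {(a, b, c) \<in> omega_triples d. \<not> distinct [a, b, c]} + 2 * card {a :: complex. a^3 = 1 \<and> a^d \<noteq> 1} = 6 * d"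
proof -
  let ?W = "omega_roots d" and ?T = "{a :: complex. a^3 = 1 \<and> a^d \<noteq> 1}"
  let ?N1 = "(\<lambda>a. (a, a, inverse (a * a))) ` ?W" and ?N2 = "(\<lambda>a. (a, inverse (a * a), a)) ` ?W"
    and ?N3 = "(\<lambda>a. (inverse (a * a), a, a)) ` ?W" and ?D = "(\<lambda>a. (a, a, a)) ` ?T"
  have T: "a \<in> ?W \<and> inverse (a * a) = a" if "a \<in> ?T" for a
  proof -
    have a3: "a^3 = 1" and "a^d \<noteq> 1"
      using that by simp_all
    moreover have "(a^d)^3 = (a^3)^d"
      by (metis power_mult mult.commute)
    moreover have "a \<noteq> 0"
      using a3 by auto
    ultimately show ?thesis
      using inverse_square_eq_iff[of a] by (simp add: omega_roots_def)
  qed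
  have W: "a \<in> ?T" if "a \<in> ?W" "inverse (a * a) = a" for a
    using that inverse_square_eq_iff[of a] omega_roots_nonzero[OF that(1)] by (auto simp: omega_roots_def)
  have "?D \<subseteq> ?N1" "?D \<subseteq> ?N2" "?D \<subseteq> ?N3"
    using T by (auto intro!: image_eqI)
  moreover have "?N1 \<inter> ?N2 \<subseteq> ?D" "?N1 \<inter> ?N3 \<subseteq> ?D" "?N2 \<inter> ?N3 \<subseteq> ?D"
    using W by auto
  ultimately have "?N1 \<inter> ?N2 = ?D" "(?N1 \<union> ?N2) \<inter> ?N3 = ?D"
    by blast+
  moreover have fin: "finite ?N1" "finite ?N2" "finite ?N3"
    using card_omega_roots(1)[OF d] by simp_all
  moreover have "card ?N1 = 2 * d" "card ?N2 = 2 * d" "card ?N3 = 2 * d"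
    using card_omega_roots(2)[OF d] by (simp_all add: card_image inj_on_def)
  moreover have "card ?D = card ?T"
    by (simp add: card_image inj_on_def)
  ultimately have "card (?N1 \<union> ?N2 \<union> ?N3) + 2 * card ?T = 6 * d"
    using card_Un_Int[of ?N1 ?N2] card_Un_Int[of "?N1 \<union> ?N2" ?N3] by simp
  then show "card {(a, b, c) \<in> omega_triples d. \<not> distinct [a, b, c]} + 2 * card ?T = 6 * d"
    unfolding omega_triples_degenerate .
  show "finite {(a, b, c) \<in> omega_triples d. \<not> distinct [a, b, c]}"
    unfolding omega_triples_degenerate using fin by simp
qed

lemma card_distinct_omega_triples:
  assumes d: "d \<ge> 1"
  shows "finite {(a, b, c) \<in> omega_triples d. distinct [a, b, c]}"
    and "card {(a, b, c) \<in> omega_triples d. distinct [a, b, c]} + 6 * d =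
      2 * d * d + 2 * card {a :: complex. a^3 = 1 \<and> a^d \<noteq> 1}"
proof -
  let ?D = "{(a, b, c) \<in> omega_triples d. distinct [a, b, c]}"
    and ?N = "{(a, b, c) \<in> omega_triples d. \<not> distinct [a, b, c]}"
  have fin: "finite ?D" "finite ?N"
    using card_omega_triples(1)[OF d] by (auto intro: finite_subset)
  have "omega_triples d = ?D \<union> ?N" "?D \<inter> ?N = {}"
    by blast+
  then have "card (omega_triples d) = card ?D + card ?N"
    using card_Un_disjoint[OF fin] by simp
  then show "finite ?D" "card ?D + 6 * d = 2 * d * d + 2 * card {a :: complex. a^3 = 1 \<and> a^d \<noteq> 1}"
    using fin card_omega_triples(2)[OF d] card_omega_triples_degenerate(2)[OF d] by simp_all
qed

lemma omega_triples_perm: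
  assumes t: "(a, b, c) \<in> omega_triples d" and s: "s \<in> triple_perms (a, b, c)"
  shows "s \<in> omega_triples d"
proof -
  have prod: "a * b * c = 1" and pow: "b^d = a^d" "c^d = a^d" "(a^d)^3 = 1" "a^d \<noteq> 1"
    using t by (auto simp: omega_triples_def)
  from prod have "a * c * b = 1" "b * a * c = 1" "b * c * a = 1" "c * a * b = 1" "c * b * a = 1"
    by (simp_all only: ac_simps)
  with s prod pow show ?thesis
    by (auto simp: triple_perms_def omega_triples_def)
qed

lemma root_point_fibre_omega_triples:
  assumes abc: "(a, b, c) \<in> omega_triples d" "distinct [a, b, c]"
  shows "{s \<in> {(a, b, c) \<in> omega_triples d. distinct [a, b, c]}. root_point s = root_point (a, b, c)} =
    triple_perms (a, b, c)"
proof (intro equalityI subsetI)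
  fix s
  assume "s \<in> {s \<in> {(a, b, c) \<in> omega_triples d. distinct [a, b, c]}. root_point s = root_point (a, b, c)}"
  then obtain a' b' c' where s: "s = (a', b', c')" "(a', b', c') \<in> omega_triples d" "distinct [a', b', c']"
    and eq: "root_point (a', b', c') = root_point (a, b, c)"
    by (cases s) auto
  show "s \<in> triple_perms (a, b, c)"
    using eq root_point_eq_iff[of a b c a' b' c'] abc s by (simp add: omega_triples_def)
next
  fix s
  assume s: "s \<in> triple_perms (a, b, c)"
  then obtain a' b' c' where s': "s = (a', b', c')" "distinct [a', b', c']"
    using abc(2) by (auto simp: triple_perms_def)
  moreover have "s \<in> omega_triples d"
    by (rule omega_triples_perm[OF abc(1) s])
  ultimately show "s \<in> {s \<in> {(a, b, c) \<in> omega_triples d. distinct [a, b, c]}. root_point s = root_point (a, b, c)}"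
    using root_point_triple_perms[OF s] by simp
qed

lemma card_crit_level_neg_one:
  assumes d: "d \<ge> 1"
  shows "finite {(x, y) \<in> crit_points (folding_A2_R d). folding_A2_R d x y = -1}"
    and "card {(a, b, c) \<in> omega_triples d. distinct [a, b, c]} =
      6 * card {(x, y) \<in> crit_points (folding_A2_R d). folding_A2_R d x y = -1}"
proof -
  show "finite {(x, y) \<in> crit_points (folding_A2_R d). folding_A2_R d x y = -1}"
    unfolding crit_level_neg_one[OF d] using card_distinct_omega_triples(1)[OF d] by simp
  show "card {(a, b, c) \<in> omega_triples d. distinct [a, b, c]} =
      6 * card {(x, y) \<in> crit_points (folding_A2_R d). folding_A2_R d x y = -1}"
    unfolding crit_level_neg_one[OF d]
  proof (rule card_eq_mult_card_image)
    fix t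
    assume t: "t \<in> {(a, b, c) \<in> omega_triples d. distinct [a, b, c]}"
    obtain a b c where abc: "t = (a, b, c)"
      by (cases t)
    with t have "(a, b, c) \<in> omega_triples d" "distinct [a, b, c]"
      by simp_all
    then show "card {s \<in> {(a, b, c) \<in> omega_triples d. distinct [a, b, c]}. root_point s = root_point t} = 6"
      unfolding abc by (simp only: root_point_fibre_omega_triples card_triple_perms)
  qed (rule card_distinct_omega_triples(1)[OF d])
qed

theorem lemma1:
  fixes d :: nat
  assumes "d \<ge> 1"
  defines "C \<equiv> crit_points (folding_A2_R d)"
  shows "(\<forall>(x, y) \<in> C. x \<in> \<real> \<and> y \<in> \<real>)
    \<and> finite {(x, y) \<in> C. folding_A2_R d x y = 0}
    \<and> card {(x, y) \<in> C. folding_A2_R d x y = 0} = d choose 2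
    \<and> finite {(x, y) \<in> C. folding_A2_R d x y = -1}
    \<and> real (card {(x, y) \<in> C. folding_A2_R d x y = -1}) =
        (if d mod 3 = 0 then real d ^ 2 / 3 - real d else real d ^ 2 / 3 - real d + 2 / 3)
    \<and> (\<forall>(x, y) \<in> C. folding_A2_R d x y \<noteq> 0 \<and> folding_A2_R d x y \<noteq> -1
          \<longrightarrow> folding_A2_R d x y = 8)"
proof -
  let ?n = "card {(x, y) \<in> C. folding_A2_R d x y = -1}"
  have "6 * ?n + 6 * d = 2 * d * d + 2 * (if d mod 3 = 0 then 0 else 2)"
    using card_crit_level_neg_one(2)[OF assms(1)] card_distinct_omega_triples(2)[OF assms(1)]
    by (simp add: C_def card_cube_roots_with_nontrivial_power)
  then have "real (6 * ?n + 6 * d) = real (2 * d * d + 2 * (if d mod 3 = 0 then 0 else 2))"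
    by (rule arg_cong)
  then have "6 * real ?n + 6 * real d = 2 * real d * real d + (if d mod 3 = 0 then 0 else 4)"
    by simp
  then have count: "real ?n = (if d mod 3 = 0 then real d ^ 2 / 3 - real d else real d ^ 2 / 3 - real d + 2 / 3)"
    by (simp add: field_simps power2_eq_square split: if_splits)
  have "folding_A2_R d x y = 8"
    if "(x, y) \<in> C" "folding_A2_R d x y \<noteq> 0" "folding_A2_R d x y \<noteq> -1" for x y
    using that(1) assms(1) unfolding C_def
    by (cases rule: crit_point_cases) (use that in \<open>simp_all split: if_splits\<close>)
  then show ?thesis
    using crit_points_real[OF _ assms(1)] card_crit_level_zero[OF assms(1)]
      card_crit_level_neg_one(1)[OF assms(1)] count
    by (auto simp: C_def)
qed

end
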